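(* Let $X$ be a nominal $\mathrm{Perm}$-set and $Y$ a nominal $\mathrm{Sb}$-set. (1) If $\dim(X)\le 1$, then the unit $\eta_X\colon X\to UF(X)$, $\eta_X(x)=[\mathrm{id},x]$, is an isomorphism. (2) If $\dim(Y)\le 1$, then the counit $\epsilon_Y\colon FU(Y)\to Y$, $\epsilon_Y([m,y])=m\cdot y$, is an isomorphism.
   Context: Atoms $\mathbb{A}$ (countably infinite); $\mathrm{Sb}$ = monoid of functions $\mathbb{A}\to\mathbb{A}$ that are the identity outside a finite set, under composition; $\mathrm{Perm}\subseteq\mathrm{Sb}$ the bijections. For $M\in\{\mathrm{Sb},\mathrm{Perm}\}$: nominal $M$-sets are sets with $M$-action in which every $x$ has a finite support $C\subseteq\mathbb{A}$ (meaning $m_1|_C=m_2|_C\Rightarrow m_1x=m_2x$ for $m_i\in M$); each $x$ has a least finite support $\mathrm{supp}(x)$; $\dim(X)=\max_x|\mathrm{supp}(x)|$. $U$ forgets from nominal $\mathrm{Sb}$-sets to nominal $\mathrm{Perm}$-sets. For a nominal $\mathrm{Perm}$-set $X$, $F(X)=(\mathrm{Sb}\times X)/{\sim}$, $\sim$ the least equivalence containing $(m,gx)\sim(mg,x)$ ($g\in\mathrm{Perm}$) and $(m,x)\sim(m',x)$ if $m|_C=m'|_C$ for some $\mathrm{Perm}$-support $C$ of $x$; classes $[m,x]$, action $n\cdot[m,x]=[nm,x]$. $F$ is left adjoint to $U$ with the stated unit and counit. *)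

theory Defs
  imports Main
begin

type_synonym atom = nat

definition Sb :: "(atom \<Rightarrow> atom) set" where
  "Sb = {m. finite {a. m a \<noteq> a}}"

definition Perm :: "(atom \<Rightarrow> atom) set" where
  "Perm = {m \<in> Sb. bij m}"

definition supports :: "(atom \<Rightarrow> atom) set \<Rightarrow> ((atom \<Rightarrow> atom) \<Rightarrow> 'x \<Rightarrow> 'x) \<Rightarrow> atom set \<Rightarrow> 'x \<Rightarrow> bool" where
  "supports M act C x \<longleftrightarrow>
     (\<forall>m1\<in>M. \<forall>m2\<in>M. (\<forall>a\<in>C. m1 a = m2 a) \<longrightarrow> act m1 x = act m2 x)"

definition nominal_set :: "(atom \<Rightarrow> atom) set \<Rightarrow> 'x set \<Rightarrow> ((atom \<Rightarrow> atom) \<Rightarrow> 'x \<Rightarrow> 'x) \<Rightarrow> bool" where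
  "nominal_set M X act \<longleftrightarrow>
     (\<forall>m\<in>M. \<forall>x\<in>X. act m x \<in> X) \<and>
     (\<forall>x\<in>X. act id x = x) \<and>
     (\<forall>m1\<in>M. \<forall>m2\<in>M. \<forall>x\<in>X. act (m1 \<circ> m2) x = act m1 (act m2 x)) \<and>
     (\<forall>x\<in>X. \<exists>C. finite C \<and> supports M act C x)"

definition supp :: "(atom \<Rightarrow> atom) set \<Rightarrow> ((atom \<Rightarrow> atom) \<Rightarrow> 'x \<Rightarrow> 'x) \<Rightarrow> 'x \<Rightarrow> atom set" where
  "supp M act x = (THE C. finite C \<and> supports M act C x \<and>
      (\<forall>D. finite D \<and> supports M act D x \<longrightarrow> C \<subseteq> D))"

definition dim_le_one :: "(atom \<Rightarrow> atom) set \<Rightarrow> 'x set \<Rightarrow> ((atom \<Rightarrow> atom) \<Rightarrow> 'x \<Rightarrow> 'x) \<Rightarrow> bool" where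
  "dim_le_one M X act \<longleftrightarrow> (\<forall>x\<in>X. card (supp M act x) \<le> 1)"

inductive Frel :: "'x set \<Rightarrow> ((atom \<Rightarrow> atom) \<Rightarrow> 'x \<Rightarrow> 'x) \<Rightarrow>
    (atom \<Rightarrow> atom) \<times> 'x \<Rightarrow> (atom \<Rightarrow> atom) \<times> 'x \<Rightarrow> bool"
  for X act where
  refl: "m \<in> Sb \<Longrightarrow> x \<in> X \<Longrightarrow> Frel X act (m, x) (m, x)"
| sym: "Frel X act p q \<Longrightarrow> Frel X act q p"
| trans: "Frel X act p q \<Longrightarrow> Frel X act q r \<Longrightarrow> Frel X act p r"
| perm: "m \<in> Sb \<Longrightarrow> g \<in> Perm \<Longrightarrow> x \<in> X \<Longrightarrow> Frel X act (m, act g x) (m \<circ> g, x)"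
| supp_eq: "m \<in> Sb \<Longrightarrow> m' \<in> Sb \<Longrightarrow> x \<in> X \<Longrightarrow> finite C \<Longrightarrow> supports Perm act C x \<Longrightarrow>
      (\<forall>a\<in>C. m a = m' a) \<Longrightarrow> Frel X act (m, x) (m', x)"

definition Fclass :: "'x set \<Rightarrow> ((atom \<Rightarrow> atom) \<Rightarrow> 'x \<Rightarrow> 'x) \<Rightarrow> (atom \<Rightarrow> atom) \<Rightarrow> 'x \<Rightarrow>
    ((atom \<Rightarrow> atom) \<times> 'x) set" where
  "Fclass X act m x = {q. Frel X act (m, x) q}"

definition F_carrier :: "'x set \<Rightarrow> ((atom \<Rightarrow> atom) \<Rightarrow> 'x \<Rightarrow> 'x) \<Rightarrow> ((atom \<Rightarrow> atom) \<times> 'x) set set" where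
  "F_carrier X act = {Fclass X act m x | m x. m \<in> Sb \<and> x \<in> X}"

text \<open>n \<cdot> [m,x] = [n m, x].\<close>
definition F_act :: "'x set \<Rightarrow> ((atom \<Rightarrow> atom) \<Rightarrow> 'x \<Rightarrow> 'x) \<Rightarrow>
    (atom \<Rightarrow> atom) \<Rightarrow> ((atom \<Rightarrow> atom) \<times> 'x) set \<Rightarrow> ((atom \<Rightarrow> atom) \<times> 'x) set" where
  "F_act X act n c = {q. \<exists>p\<in>c. Frel X act (n \<circ> fst p, snd p) q}"

definition unit_map :: "'x set \<Rightarrow> ((atom \<Rightarrow> atom) \<Rightarrow> 'x \<Rightarrow> 'x) \<Rightarrow> 'x \<Rightarrow> ((atom \<Rightarrow> atom) \<times> 'x) set" where
  "unit_map X act x = Fclass X act id x"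

definition counit_map :: "((atom \<Rightarrow> atom) \<Rightarrow> 'y \<Rightarrow> 'y) \<Rightarrow> ((atom \<Rightarrow> atom) \<times> 'y) set \<Rightarrow> 'y" where
  "counit_map act c = (let p = (SOME p. p \<in> c) in act (fst p) (snd p))"

definition nom_iso :: "(atom \<Rightarrow> atom) set \<Rightarrow> 'a set \<Rightarrow> ((atom \<Rightarrow> atom) \<Rightarrow> 'a \<Rightarrow> 'a) \<Rightarrow>
    'b set \<Rightarrow> ((atom \<Rightarrow> atom) \<Rightarrow> 'b \<Rightarrow> 'b) \<Rightarrow> ('a \<Rightarrow> 'b) \<Rightarrow> bool" where
  "nom_iso M A actA B actB f \<longleftrightarrow>
     bij_betw f A B \<and> (\<forall>m\<in>M. \<forall>a\<in>A. f (actA m a) = actB m (f a))"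

end

theory Submission
  imports Defs "HOL-Combinatorics.Permutations"
begin

text \<open>If supp x has at most one atom, every substitution m agrees on supp x with a permutation g
  (the identity or the transposition of a and m a). Hence [m, x] = [id, g x], so the unit is
  onto; and m x := g x is well defined and constant on the classes of F(X), which makes the unit
  injective. For the counit, the point is that in a nominal Sb-set every Perm-support is already
  an Sb-support, so (m, y) \<mapsto> m y is constant on classes; with dim Y \<le> 1 again
  [m, y] = [id, m y], which gives injectivity.\<close>

lemma Sb_id [simp]: "id \<in> Sb"
  by (simp add: Sb_def)

lemma Sb_comp: "m \<in> Sb \<Longrightarrow> n \<in> Sb \<Longrightarrow> m \<circ> n \<in> Sb"
  unfolding Sb_def
  by (auto intro: finite_subset[of _ "{a. m a \<noteq> a} \<union> {a. n a \<noteq> a}"])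

lemma Perm_imp_Sb: "g \<in> Perm \<Longrightarrow> g \<in> Sb"
  by (simp add: Perm_def)

lemma Perm_iff_permutes: "g \<in> Perm \<longleftrightarrow> (\<exists>S. finite S \<and> g permutes S)"
proof
  assume "g \<in> Perm"
  then have "finite {a. g a \<noteq> a}" "g permutes UNIV"
    by (auto simp: Perm_def Sb_def permutes_univ bij_iff)
  then show "\<exists>S. finite S \<and> g permutes S"
    by (auto intro: permutes_superset)
next
  assume "\<exists>S. finite S \<and> g permutes S"
  then obtain S where "finite S" "g permutes S" by blast
  then show "g \<in> Perm"
    by (auto simp: Perm_def Sb_def permutes_bij permutes_def intro: finite_subset[of _ S])
qed

lemma Perm_id [simp]: "id \<in> Perm"
  by (simp add: Perm_def)

lemma Perm_comp: "g \<in> Perm \<Longrightarrow> h \<in> Perm \<Longrightarrow> g \<circ> h \<in> Perm"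
  by (auto simp: Perm_def Sb_comp bij_comp)

lemma Perm_inv: "g \<in> Perm \<Longrightarrow> inv g \<in> Perm"
  by (meson Perm_iff_permutes permutes_inv)

lemma transpose_in_Perm: "transpose a b \<in> Perm"
  unfolding Perm_iff_permutes by (metis finite.emptyI finite.insertI permutes_swap_id insertI1 insert_commute)

lemma ex_Perm_agreeing_on_card_le_1:
  assumes "finite A" "card A \<le> 1"
  obtains g where "g \<in> Perm" "\<forall>a\<in>A. g a = m a"
proof (cases "A = {}")
  case False
  then obtain a where "a \<in> A" by blast
  moreover have "\<forall>b\<in>A. b = a"
    using assms \<open>a \<in> A\<close> card_le_Suc0_iff_eq by (metis One_nat_def)
  ultimately show ?thesis
    using that[OF transpose_in_Perm[of a "m a"]] by auto
qed (use that Perm_id in blast)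

lemma nominal_act_closed: "nominal_set M X act \<Longrightarrow> m \<in> M \<Longrightarrow> x \<in> X \<Longrightarrow> act m x \<in> X"
  unfolding nominal_set_def by blast

lemma nominal_act_id: "nominal_set M X act \<Longrightarrow> x \<in> X \<Longrightarrow> act id x = x"
  unfolding nominal_set_def by blast

lemma nominal_act_comp:
  "nominal_set M X act \<Longrightarrow> m \<in> M \<Longrightarrow> n \<in> M \<Longrightarrow> x \<in> X \<Longrightarrow> act (m \<circ> n) x = act m (act n x)"
  unfolding nominal_set_def by blast

lemma nominal_ex_finite_support: "nominal_set M X act \<Longrightarrow> x \<in> X \<Longrightarrow> \<exists>C. finite C \<and> supports M act C x"
  unfolding nominal_set_def by blast

lemma supports_mono: "supports M act C x \<Longrightarrow> C \<subseteq> D \<Longrightarrow> supports M act D x"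
  unfolding supports_def by blast

lemma supports_Sb_imp_Perm: "supports Sb act C x \<Longrightarrow> supports Perm act C x"
  unfolding supports_def using Perm_imp_Sb by blast

lemma supports_image:
  assumes "nominal_set M X act" "x \<in> X" "g \<in> M" "supports M act D x"
    and comp_closed: "\<And>m n. m \<in> M \<Longrightarrow> n \<in> M \<Longrightarrow> m \<circ> n \<in> M"
  shows "supports M act (g ` D) (act g x)"
  unfolding supports_def
proof (intro ballI impI)
  fix m1 m2 assume m: "m1 \<in> M" "m2 \<in> M" and "\<forall>a\<in>g ` D. m1 a = m2 a"
  then have "act (m1 \<circ> g) x = act (m2 \<circ> g) x"
    using \<open>supports M act D x\<close> comp_closed \<open>g \<in> M\<close> unfolding supports_def by auto
  then show "act m1 (act g x) = act m2 (act g x)"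
    using nominal_act_comp[OF assms(1) _ \<open>g \<in> M\<close> \<open>x \<in> X\<close>] m by simp
qed

lemma supports_Int_Sb:
  assumes "finite C" "finite D" "supports Sb act C x" "supports Sb act D x"
  shows "supports Sb act (C \<inter> D) x"
  unfolding supports_def
proof (intro ballI impI)
  fix m1 m2 assume m: "m1 \<in> Sb" "m2 \<in> Sb" and agree: "\<forall>a\<in>C \<inter> D. m1 a = m2 a"
  define n where "n a = (if a \<in> C then m1 a else if a \<in> D then m2 a else a)" for a
  have "{a. n a \<noteq> a} \<subseteq> C \<union> D"
    by (auto simp: n_def)
  then have "n \<in> Sb"
    using assms(1,2) unfolding Sb_def by (simp add: finite_subset)
  have "\<forall>a\<in>C. m1 a = n a" "\<forall>a\<in>D. n a = m2 a"
    using agree by (auto simp: n_def)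
  then have "act m1 x = act n x" "act n x = act m2 x"
    using assms(3,4) m \<open>n \<in> Sb\<close> unfolding supports_def by blast+
  then show "act m1 x = act m2 x" by simp
qed

lemma transpose_fresh_act:
  assumes "supports Perm act C x" "a \<notin> C" "b \<notin> C"
  shows "act (transpose a b) x = act id x"
  using assms transpose_in_Perm unfolding supports_def by (metis Perm_id id_apply transpose_apply_other)

lemma supports_Perm_if_transpositions_fix:
  assumes N: "nominal_set Perm X act" and x: "x \<in> X"
    and transpositions_fix: "\<And>a b. a \<notin> E \<Longrightarrow> b \<notin> E \<Longrightarrow> act (transpose a b) x = x"
  shows "supports Perm act E x"
  unfolding supports_def
proof (intro ballI impI)
  fix m1 m2 assume m: "m1 \<in> Perm" "m2 \<in> Perm" and agree: "\<forall>a\<in>E. m1 a = m2 a"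
  define s where "s = inv m2 \<circ> m1"
  have "bij m2" using m(2) by (simp add: Perm_def)
  then have "m2 \<circ> inv m2 = id" by (simp add: bij_is_surj flip: surj_iff)
  then have m1_eq: "m1 = m2 \<circ> s" by (simp add: s_def o_assoc)
  have "s \<in> Perm"
    unfolding s_def using m by (simp add: Perm_comp Perm_inv)
  then obtain S where S: "finite S" "s permutes S"
    unfolding Perm_iff_permutes by blast
  have "s a = a" if "a \<in> E" for a
    using agree that \<open>bij m2\<close> by (simp add: s_def bij_is_inj)
  with S(2) have "s permutes S - E"
    by (rule permutes_superset) blast
  moreover have fin: "finite (S - E)"
    using S(1) by simp
  ultimately have "act s x = x"
  proof (induction s rule: permutes_induct)
    case id
    then show ?case using nominal_act_id[OF N x] by (simp add: id_def)
  next
    case (swap a b p)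
    then have "p \<in> Perm" using Perm_iff_permutes fin by blast
    then have "act (transpose a b \<circ> p) x = act (transpose a b) (act p x)"
      by (rule nominal_act_comp[OF N transpose_in_Perm _ x])
    also have "\<dots> = x"
      using swap transpositions_fix by simp
    finally show ?case .
  qed
  with \<open>s \<in> Perm\<close> show "act m1 x = act m2 x"
    using nominal_act_comp[OF N m(2) _ x] m1_eq by simp
qed

text \<open>A transposition of two atoms outside C \<inter> D is a product of three transpositions,
  each of which avoids C or avoids D.\<close>
lemma supports_Int_Perm:
  assumes N: "nominal_set Perm X act" and x: "x \<in> X"
    and fin: "finite C" "finite D" and C: "supports Perm act C x" and D: "supports Perm act D x"
  shows "supports Perm act (C \<inter> D) x"
proof (rule supports_Perm_if_transpositions_fix[OF N x])
  have fresh_fix: "act (transpose a c) x = x" if "a \<notin> C \<inter> D" "c \<notin> C \<union> D" for a c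
  proof -
    have "act (transpose a c) x = act id x"
      using that transpose_fresh_act[OF C, of a c] transpose_fresh_act[OF D, of a c] by auto
    then show ?thesis using nominal_act_id[OF N x] by simp
  qed
  fix a b assume "a \<notin> C \<inter> D" "b \<notin> C \<inter> D"
  show "act (transpose a b) x = x"
  proof (cases "a = b")
    case True
    then show ?thesis using nominal_act_id[OF N x] by simp
  next
    case False
    obtain c where c: "c \<notin> C \<union> D \<union> {b}"
      using ex_new_if_finite[OF infinite_UNIV_nat, of "C \<union> D \<union> {b}"] fin by auto
    have cb: "act (transpose c b) x = x"
      using fresh_fix[of b c] \<open>b \<notin> C \<inter> D\<close> c by (simp add: transpose_commute)
    have "transpose a b = transpose a c \<circ> transpose c b \<circ> transpose a c"
      using False c by (simp add: transpose_comp_triple)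
    then have "act (transpose a b) x = act (transpose a c) (act (transpose c b) (act (transpose a c) x))"
      using nominal_act_comp[OF N Perm_comp transpose_in_Perm x, OF transpose_in_Perm transpose_in_Perm]
        nominal_act_comp[OF N transpose_in_Perm transpose_in_Perm nominal_act_closed[OF N transpose_in_Perm x]]
      by simp
    then show ?thesis
      using fresh_fix \<open>a \<notin> C \<inter> D\<close> c cb by simp
  qed
qed

lemma supp_least_support:
  assumes "finite C" "supports M act C x"
    and Int_closed: "\<And>C D. finite C \<Longrightarrow> finite D \<Longrightarrow> supports M act C x \<Longrightarrow> supports M act D x
      \<Longrightarrow> supports M act (C \<inter> D) x"
  shows "finite (supp M act x)" "supports M act (supp M act x) x"
    "\<And>D. finite D \<Longrightarrow> supports M act D x \<Longrightarrow> supp M act x \<subseteq> D"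
proof -
  define P where "P C \<longleftrightarrow> finite C \<and> supports M act C x" for C
  obtain S where S: "P S" "\<And>D. P D \<Longrightarrow> card S \<le> card D"
    using ex_has_least_nat[of P C card] assms(1,2) P_def by blast
  have least: "S \<subseteq> D" if "P D" for D
  proof -
    have "P (S \<inter> D)" using S(1) that Int_closed unfolding P_def by auto
    then have "card S \<le> card (S \<inter> D)" using S(2) by blast
    then have "S \<inter> D = S" using S(1) unfolding P_def by (metis Int_lower1 card_seteq)
    then show ?thesis by blast
  qed
  have "supp M act x = S"
    unfolding supp_def using S(1) least P_def by (intro the_equality) auto
  then show "finite (supp M act x)" "supports M act (supp M act x) x"
    "\<And>D. finite D \<Longrightarrow> supports M act D x \<Longrightarrow> supp M act x \<subseteq> D"
    using S(1) least P_def by auto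
qed

lemma
  assumes "nominal_set Perm X act" "x \<in> X"
  shows finite_supp_Perm: "finite (supp Perm act x)"
    and supports_supp_Perm: "supports Perm act (supp Perm act x) x"
    and supp_Perm_subset: "\<And>D. finite D \<Longrightarrow> supports Perm act D x \<Longrightarrow> supp Perm act x \<subseteq> D"
proof -
  obtain C where C: "finite C" "supports Perm act C x"
    using nominal_ex_finite_support[OF assms] by blast
  show "finite (supp Perm act x)" "supports Perm act (supp Perm act x) x"
    "\<And>D. finite D \<Longrightarrow> supports Perm act D x \<Longrightarrow> supp Perm act x \<subseteq> D"
    using supp_least_support[OF C supports_Int_Perm[OF assms]] by auto
qed

lemma
  assumes "nominal_set Sb X act" "x \<in> X"
  shows finite_supp_Sb: "finite (supp Sb act x)"
    and supports_supp_Sb: "supports Sb act (supp Sb act x) x"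
    and supp_Sb_subset: "\<And>D. finite D \<Longrightarrow> supports Sb act D x \<Longrightarrow> supp Sb act x \<subseteq> D"
proof -
  obtain C where C: "finite C" "supports Sb act C x"
    using nominal_ex_finite_support[OF assms] by blast
  show "finite (supp Sb act x)" "supports Sb act (supp Sb act x) x"
    "\<And>D. finite D \<Longrightarrow> supports Sb act D x \<Longrightarrow> supp Sb act x \<subseteq> D"
    using supp_least_support[OF C supports_Int_Sb] by auto
qed

lemma image_supp_Perm_subset:
  assumes N: "nominal_set Perm X act" and x: "x \<in> X" and g: "g \<in> Perm"
  shows "g ` supp Perm act x \<subseteq> supp Perm act (act g x)"
proof -
  define D where "D = supp Perm act (act g x)"
  have gx: "act g x \<in> X" by (rule nominal_act_closed[OF N g x])
  have "inv g \<circ> g = id" using g by (simp add: Perm_def bij_is_inj)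
  then have "act (inv g) (act g x) = x"
    using nominal_act_comp[OF N Perm_inv[OF g] g x] nominal_act_id[OF N x] by simp
  moreover have "supports Perm act (inv g ` D) (act (inv g) (act g x))"
    using supports_image[OF N gx Perm_inv[OF g] supports_supp_Perm[OF N gx]] Perm_comp
    unfolding D_def by blast
  ultimately have "supp Perm act x \<subseteq> inv g ` D"
    using supp_Perm_subset[OF N x] finite_supp_Perm[OF N gx] unfolding D_def by simp
  then have "g ` supp Perm act x \<subseteq> g ` inv g ` D" by blast
  also have "\<dots> = D"
    using g by (simp add: Perm_def image_image bij_is_surj surj_f_inv_f)
  finally show ?thesis unfolding D_def .
qed

text \<open>Conjugating a least Sb-support by a transposition that fixes y shows that it
  cannot contain an atom outside a Perm-support of y.\<close>
lemma supports_Perm_imp_Sb: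
  assumes N: "nominal_set Sb Y act" and y: "y \<in> Y" and C: "finite C" "supports Perm act C y"
  shows "supports Sb act C y"
proof -
  define S where "S = supp Sb act y"
  have "S \<subseteq> C"
  proof
    fix a assume "a \<in> S"
    show "a \<in> C"
    proof (rule ccontr)
      assume "a \<notin> C"
      obtain b where b: "b \<notin> S \<union> C \<union> {a}"
        using ex_new_if_finite[OF infinite_UNIV_nat, of "S \<union> C \<union> {a}"] C(1)
          finite_supp_Sb[OF N y] S_def by auto
      define t where "t = transpose a b"
      have "t \<in> Sb" unfolding t_def by (simp add: Perm_imp_Sb transpose_in_Perm)
      have "act t y = y"
        using transpose_fresh_act[OF C(2) \<open>a \<notin> C\<close>, of b] b nominal_act_id[OF N y]
        unfolding t_def by simp
      moreover have "supports Sb act (t ` S) (act t y)"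
        using supports_image[OF N y \<open>t \<in> Sb\<close> supports_supp_Sb[OF N y]] Sb_comp
        unfolding S_def by blast
      ultimately have "S \<subseteq> t ` S"
        using supp_Sb_subset[OF N y] finite_supp_Sb[OF N y] unfolding S_def by simp
      then obtain s where "s \<in> S" "a = t s"
        using \<open>a \<in> S\<close> by blast
      then have "b \<in> S"
        unfolding t_def by (metis transpose_apply_first transpose_involutory)
      then show False
        using b unfolding t_def by simp
    qed
  qed
  then show ?thesis
    unfolding S_def by (rule supports_mono[OF supports_supp_Sb[OF N y]])
qed

lemma Frel_invariant:
  assumes "Frel X act p q"
    and perm: "\<And>m g x. m \<in> Sb \<Longrightarrow> g \<in> Perm \<Longrightarrow> x \<in> X \<Longrightarrow> f m (act g x) = f (m \<circ> g) x"
    and supp_eq: "\<And>m m' x C. m \<in> Sb \<Longrightarrow> m' \<in> Sb \<Longrightarrow> x \<in> X \<Longrightarrow> finite C \<Longrightarrow>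
      supports Perm act C x \<Longrightarrow> \<forall>a\<in>C. m a = m' a \<Longrightarrow> f m x = f m' x"
  shows "f (fst p) (snd p) = f (fst q) (snd q)"
  using assms(1)
proof induction
  case (perm m g x)
  then show ?case unfolding fst_conv snd_conv by (rule assms(2))
next
  case (supp_eq m m' x C)
  then show ?case unfolding fst_conv snd_conv by (rule assms(3))
qed simp_all

lemma Frel_comp_left:
  assumes "Frel X act p q" "n \<in> Sb"
  shows "Frel X act (n \<circ> fst p, snd p) (n \<circ> fst q, snd q)"
  using assms
proof (induction rule: Frel.induct)
  case (refl m x)
  then show ?case by (metis Frel.refl Sb_comp fst_conv snd_conv)
next
  case (sym p q)
  then show ?case by (simp add: Frel.sym)
next
  case (trans p q r)
  then show ?case by (blast intro: Frel.trans)
next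
  case (perm m g x)
  then show ?case
    unfolding fst_conv snd_conv o_assoc by (intro Frel.perm Sb_comp)
next
  case (supp_eq m m' x C)
  then show ?case
    unfolding fst_conv snd_conv by (intro Frel.supp_eq[where C = C] Sb_comp) auto
qed

lemma Fclass_eqI:
  assumes "Frel X act (m, x) (m', x')"
  shows "Fclass X act m x = Fclass X act m' x'"
  unfolding Fclass_def using Frel.trans[OF assms] Frel.trans[OF Frel.sym[OF assms]] by blast

lemma Fclass_eqD:
  "Fclass X act m x = Fclass X act m' x' \<Longrightarrow> m' \<in> Sb \<Longrightarrow> x' \<in> X \<Longrightarrow> Frel X act (m, x) (m', x')"
  unfolding Fclass_def by (metis Frel.refl mem_Collect_eq)

lemma F_act_Fclass:
  assumes "n \<in> Sb" "m \<in> Sb" "x \<in> X"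
  shows "F_act X act n (Fclass X act m x) = Fclass X act (n \<circ> m) x"
proof (rule set_eqI, rule iffI)
  fix q assume "q \<in> F_act X act n (Fclass X act m x)"
  then obtain p where p: "Frel X act (m, x) p" "Frel X act (n \<circ> fst p, snd p) q"
    unfolding F_act_def Fclass_def by blast
  have "Frel X act (n \<circ> m, x) (n \<circ> fst p, snd p)"
    using Frel_comp_left[OF p(1) \<open>n \<in> Sb\<close>] unfolding fst_conv snd_conv .
  then have "Frel X act (n \<circ> m, x) q"
    using p(2) by (rule Frel.trans)
  then show "q \<in> Fclass X act (n \<circ> m) x"
    unfolding Fclass_def by simp
next
  fix q assume "q \<in> Fclass X act (n \<circ> m) x"
  then have "Frel X act (n \<circ> fst (m, x), snd (m, x)) q"
    unfolding Fclass_def fst_conv snd_conv by simp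
  moreover have "(m, x) \<in> Fclass X act m x"
    using assms by (simp add: Fclass_def Frel.refl)
  ultimately show "q \<in> F_act X act n (Fclass X act m x)"
    unfolding F_act_def by blast
qed

lemma Fclass_eq_id_act:
  assumes "m \<in> Sb" "g \<in> Perm" "x \<in> X" "finite C" "supports Perm act C x" "\<forall>a\<in>C. g a = m a"
  shows "Fclass X act m x = Fclass X act id (act g x)"
proof -
  have "Frel X act (m, x) (g, x)"
    using assms by (intro Frel.supp_eq) (auto simp: Perm_imp_Sb)
  moreover have "Frel X act (id, act g x) (g, x)"
    using Frel.perm[OF Sb_id \<open>g \<in> Perm\<close> \<open>x \<in> X\<close>] by simp
  ultimately have "Frel X act (m, x) (id, act g x)"
    by (blast intro: Frel.trans[OF _ Frel.sym])
  then show ?thesis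
    by (rule Fclass_eqI)
qed

text \<open>The choice of g does not matter: all permutations agreeing with m on supp x act alike
  on x. For dim X \<le> 1 this extends the Perm-action to an Sb-action.\<close>
definition subst_act :: "((atom \<Rightarrow> atom) \<Rightarrow> 'x \<Rightarrow> 'x) \<Rightarrow> (atom \<Rightarrow> atom) \<Rightarrow> 'x \<Rightarrow> 'x" where
  "subst_act act m x = act (SOME g. g \<in> Perm \<and> (\<forall>a\<in>supp Perm act x. g a = m a)) x"

context
  fixes X :: "'x set" and act :: "(atom \<Rightarrow> atom) \<Rightarrow> 'x \<Rightarrow> 'x"
  assumes N: "nominal_set Perm X act" and dim: "dim_le_one Perm X act"
begin

lemma ex_Perm_agreeing_on_supp:
  assumes "x \<in> X"
  obtains g where "g \<in> Perm" "\<forall>a\<in>supp Perm act x. g a = m a"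
proof (rule ex_Perm_agreeing_on_card_le_1)
  show "finite (supp Perm act x)" by (rule finite_supp_Perm[OF N assms])
  show "card (supp Perm act x) \<le> 1" using dim assms unfolding dim_le_one_def by blast
qed

lemma subst_act_eq:
  assumes x: "x \<in> X" and g: "g \<in> Perm" "\<forall>a\<in>supp Perm act x. g a = m a"
  shows "subst_act act m x = act g x"
proof -
  define h where "h = (SOME g. g \<in> Perm \<and> (\<forall>a\<in>supp Perm act x. g a = m a))"
  have "\<exists>g. g \<in> Perm \<and> (\<forall>a\<in>supp Perm act x. g a = m a)"
    using g by blast
  then have "h \<in> Perm \<and> (\<forall>a\<in>supp Perm act x. h a = m a)"
    unfolding h_def by (rule someI_ex)
  then have "h \<in> Perm" "\<forall>a\<in>supp Perm act x. h a = g a"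
    using g(2) by simp_all
  then have "act h x = act g x"
    using supports_supp_Perm[OF N x] g(1) unfolding supports_def by blast
  then show ?thesis
    unfolding subst_act_def h_def .
qed

lemma Frel_subst_act_eq:
  assumes "Frel X act p q"
  shows "subst_act act (fst p) (snd p) = subst_act act (fst q) (snd q)"
  using assms
proof (rule Frel_invariant)
  fix m g x assume "m \<in> Sb" "g \<in> Perm" "x \<in> X"
  have gx: "act g x \<in> X"
    using nominal_act_closed[OF N \<open>g \<in> Perm\<close> \<open>x \<in> X\<close>] .
  obtain h where h: "h \<in> Perm" "\<forall>a\<in>supp Perm act (act g x). h a = m a"
    using ex_Perm_agreeing_on_supp[OF gx] by blast
  have "\<forall>a\<in>supp Perm act x. (h \<circ> g) a = (m \<circ> g) a"
    using image_supp_Perm_subset[OF N \<open>x \<in> X\<close> \<open>g \<in> Perm\<close>] h(2) by auto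
  then have "subst_act act (m \<circ> g) x = act (h \<circ> g) x"
    by (rule subst_act_eq[OF \<open>x \<in> X\<close> Perm_comp[OF h(1) \<open>g \<in> Perm\<close>]])
  also have "\<dots> = act h (act g x)"
    by (rule nominal_act_comp[OF N h(1) \<open>g \<in> Perm\<close> \<open>x \<in> X\<close>])
  also have "\<dots> = subst_act act m (act g x)"
    using subst_act_eq[OF gx h] by simp
  finally show "subst_act act m (act g x) = subst_act act (m \<circ> g) x" by simp
next
  fix m m' :: "atom \<Rightarrow> atom" and x C assume "x \<in> X" "finite C" "supports Perm act C x" "\<forall>a\<in>C. m a = m' a"
  obtain g where g: "g \<in> Perm" "\<forall>a\<in>supp Perm act x. g a = m a"
    using ex_Perm_agreeing_on_supp[OF \<open>x \<in> X\<close>] by blast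
  have "supp Perm act x \<subseteq> C"
    using supp_Perm_subset[OF N \<open>x \<in> X\<close> \<open>finite C\<close> \<open>supports Perm act C x\<close>] .
  then have "\<forall>a\<in>supp Perm act x. g a = m' a"
    using g(2) \<open>\<forall>a\<in>C. m a = m' a\<close> by auto
  then show "subst_act act m x = subst_act act m' x"
    using subst_act_eq[OF \<open>x \<in> X\<close> g] subst_act_eq[OF \<open>x \<in> X\<close> g(1)] by simp
qed

lemma unit_map_nom_iso: "nom_iso Perm X act (F_carrier X act) (F_act X act) (unit_map X act)"
  unfolding nom_iso_def bij_betw_def
proof (intro conjI ballI)
  show "inj_on (unit_map X act) X"
  proof (rule inj_onI)
    fix x y assume "x \<in> X" "y \<in> X" "unit_map X act x = unit_map X act y"
    then have "Frel X act (id, x) (id, y)"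
      unfolding unit_map_def by (intro Fclass_eqD Sb_id)
    then have "subst_act act id x = subst_act act id y"
      using Frel_subst_act_eq by fastforce
    moreover have "subst_act act id z = z" if "z \<in> X" for z
      using subst_act_eq[OF that Perm_id, of id] nominal_act_id[OF N that] by simp
    ultimately show "x = y"
      using \<open>x \<in> X\<close> \<open>y \<in> X\<close> by simp
  qed
  show "unit_map X act ` X = F_carrier X act"
  proof (intro equalityI subsetI)
    fix c assume "c \<in> F_carrier X act"
    then obtain m x where "m \<in> Sb" "x \<in> X" and c: "c = Fclass X act m x"
      unfolding F_carrier_def by blast
    obtain g where g: "g \<in> Perm" "\<forall>a\<in>supp Perm act x. g a = m a"
      using ex_Perm_agreeing_on_supp[OF \<open>x \<in> X\<close>] by blast
    have "c = unit_map X act (act g x)"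
      unfolding c unit_map_def
      using Fclass_eq_id_act[OF \<open>m \<in> Sb\<close> g(1) \<open>x \<in> X\<close> finite_supp_Perm[OF N \<open>x \<in> X\<close>]
          supports_supp_Perm[OF N \<open>x \<in> X\<close>] g(2)] .
    then show "c \<in> unit_map X act ` X"
      using nominal_act_closed[OF N \<open>g \<in> Perm\<close> \<open>x \<in> X\<close>] by blast
  next
    fix c assume "c \<in> unit_map X act ` X"
    then show "c \<in> F_carrier X act"
      unfolding unit_map_def F_carrier_def using Sb_id by blast
  qed
next
  fix g x assume "g \<in> Perm" "x \<in> X"
  have "Frel X act (id, act g x) (id \<circ> g, x)"
    by (rule Frel.perm[OF Sb_id \<open>g \<in> Perm\<close> \<open>x \<in> X\<close>])
  then have "unit_map X act (act g x) = Fclass X act g x"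
    unfolding unit_map_def id_comp by (rule Fclass_eqI)
  also have "\<dots> = F_act X act g (unit_map X act x)"
    using F_act_Fclass[OF Perm_imp_Sb[OF \<open>g \<in> Perm\<close>] Sb_id \<open>x \<in> X\<close>] by (simp add: unit_map_def)
  finally show "unit_map X act (act g x) = F_act X act g (unit_map X act x)" .
qed

end

lemma Frel_act_eq:
  assumes N: "nominal_set Sb Y act" and "Frel Y act p q"
  shows "act (fst p) (snd p) = act (fst q) (snd q)"
  using assms(2)
proof (rule Frel_invariant)
  fix m g y assume "m \<in> Sb" "g \<in> Perm" "y \<in> Y"
  then show "act m (act g y) = act (m \<circ> g) y"
    using nominal_act_comp[OF N] Perm_imp_Sb by metis
next
  fix m m' :: "atom \<Rightarrow> atom" and y C
  assume "m \<in> Sb" "m' \<in> Sb" "y \<in> Y" "finite C" "supports Perm act C y" "\<forall>a\<in>C. m a = m' a"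
  then show "act m y = act m' y"
    using supports_Perm_imp_Sb[OF N] unfolding supports_def by blast
qed

lemma counit_map_Fclass:
  assumes N: "nominal_set Sb Y act" and "m \<in> Sb" "y \<in> Y"
  shows "counit_map act (Fclass Y act m y) = act m y"
proof -
  define p where "p = (SOME p. p \<in> Fclass Y act m y)"
  have "(m, y) \<in> Fclass Y act m y"
    using assms by (simp add: Fclass_def Frel.refl)
  then have "p \<in> Fclass Y act m y"
    unfolding p_def by (rule someI)
  then have "act m y = act (fst p) (snd p)"
    using Frel_act_eq[OF N] unfolding Fclass_def by fastforce
  then show ?thesis
    unfolding counit_map_def p_def Let_def by simp
qed

lemma Fclass_eq_id_act_Sb:
  assumes N: "nominal_set Sb Y act" and dim: "dim_le_one Sb Y act" and m: "m \<in> Sb" and y: "y \<in> Y"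
  shows "Fclass Y act m y = Fclass Y act id (act m y)"
proof -
  have "card (supp Sb act y) \<le> 1"
    using dim y unfolding dim_le_one_def by blast
  then obtain g where g: "g \<in> Perm" "\<forall>a\<in>supp Sb act y. g a = m a"
    using ex_Perm_agreeing_on_card_le_1[OF finite_supp_Sb[OF N y]] by blast
  then have "act g y = act m y"
    using supports_supp_Sb[OF N y] Perm_imp_Sb m unfolding supports_def by blast
  with Fclass_eq_id_act[OF m g(1) y finite_supp_Sb[OF N y]
      supports_Sb_imp_Perm[OF supports_supp_Sb[OF N y]] g(2)]
  show ?thesis by simp
qed

lemma counit_map_nom_iso:
  assumes N: "nominal_set Sb Y act" and dim: "dim_le_one Sb Y act"
  shows "nom_iso Sb (F_carrier Y act) (F_act Y act) Y act (counit_map act)"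
  unfolding nom_iso_def bij_betw_def
proof (intro conjI ballI)
  show "inj_on (counit_map act) (F_carrier Y act)"
  proof (rule inj_onI)
    fix c d assume "c \<in> F_carrier Y act" "d \<in> F_carrier Y act"
      and eq: "counit_map act c = counit_map act d"
    then obtain m y m' y' where "m \<in> Sb" "y \<in> Y" "m' \<in> Sb" "y' \<in> Y"
      and c: "c = Fclass Y act m y" and d: "d = Fclass Y act m' y'"
      unfolding F_carrier_def by blast
    then have "act m y = act m' y'"
      using eq counit_map_Fclass[OF N] by simp
    then show "c = d"
      unfolding c d
      using Fclass_eq_id_act_Sb[OF N dim] \<open>m \<in> Sb\<close> \<open>y \<in> Y\<close> \<open>m' \<in> Sb\<close> \<open>y' \<in> Y\<close> by simp
  qed
  show "counit_map act ` F_carrier Y act = Y"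
  proof (intro equalityI subsetI)
    fix y assume "y \<in> counit_map act ` F_carrier Y act"
    then obtain m z where "m \<in> Sb" "z \<in> Y" and "y = counit_map act (Fclass Y act m z)"
      unfolding F_carrier_def by blast
    then show "y \<in> Y"
      using counit_map_Fclass[OF N] nominal_act_closed[OF N] by simp
  next
    fix y assume "y \<in> Y"
    then have "y = counit_map act (Fclass Y act id y)"
      using counit_map_Fclass[OF N Sb_id] nominal_act_id[OF N] by simp
    then show "y \<in> counit_map act ` F_carrier Y act"
      unfolding F_carrier_def using \<open>y \<in> Y\<close> Sb_id by blast
  qed
next
  fix n c assume "n \<in> Sb" "c \<in> F_carrier Y act"
  then obtain m y where "m \<in> Sb" "y \<in> Y" and c: "c = Fclass Y act m y"
    unfolding F_carrier_def by blast
  have "counit_map act (F_act Y act n c) = counit_map act (Fclass Y act (n \<circ> m) y)"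
    unfolding c using F_act_Fclass[OF \<open>n \<in> Sb\<close> \<open>m \<in> Sb\<close> \<open>y \<in> Y\<close>] by simp
  also have "\<dots> = act (n \<circ> m) y"
    using counit_map_Fclass[OF N Sb_comp[OF \<open>n \<in> Sb\<close> \<open>m \<in> Sb\<close>] \<open>y \<in> Y\<close>] .
  also have "\<dots> = act n (act m y)"
    using nominal_act_comp[OF N \<open>n \<in> Sb\<close> \<open>m \<in> Sb\<close> \<open>y \<in> Y\<close>] .
  also have "\<dots> = act n (counit_map act c)"
    unfolding c using counit_map_Fclass[OF N \<open>m \<in> Sb\<close> \<open>y \<in> Y\<close>] by simp
  finally show "counit_map act (F_act Y act n c) = act n (counit_map act c)" .
qed

theorem mainTheorem6:
  fixes X :: "'x set" and actX :: "(atom \<Rightarrow> atom) \<Rightarrow> 'x \<Rightarrow> 'x"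
    and Y :: "'y set" and actY :: "(atom \<Rightarrow> atom) \<Rightarrow> 'y \<Rightarrow> 'y"
  shows "(nominal_set Perm X actX \<and> dim_le_one Perm X actX \<longrightarrow>
            nom_iso Perm X actX (F_carrier X actX) (F_act X actX) (unit_map X actX))
       \<and> (nominal_set Sb Y actY \<and> dim_le_one Sb Y actY \<longrightarrow>
            nom_iso Sb (F_carrier Y actY) (F_act Y actY) Y actY (counit_map actY))"
  using unit_map_nom_iso counit_map_nom_iso by blast

end
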